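(* In the setting described in the context, suppose $(\eta^{l,n+1})_{l=1}^M$, $\psi^{n+1}$, $\xi^{n+1}$ (real grid functions) satisfy Scheme II given $(\eta^{l,n})_l$, $\psi^n$, $\xi^n$. Set $c^{l,m}=e^{\eta^{l,m}}$, $T^m=e^{\xi^m}$ for $m=n,n+1$. Then: (1) (mass conservation) $(e^{\eta^{l,n+1}},1)=(e^{\eta^{l,n}},1)$ for $l=1,\dots,M$; (2) (positivity) $c^{l,n+1}_i>0$ and $T^{n+1}_i>0$ for all $i,l$; (3) (discrete entropy increasing) with $S^m_h=-\sum_{l=1}^M(c^{l,m},\log c^{l,m})+(\log T^m+1,C_T)$, \[ \frac{S^{n+1}_h-S^n_h}{\Delta t}\ \ge\ \varepsilon\sum_{l=1}^M\big(\nu^le^{\eta^{l,n+1/2}}|\check{\mathbf u}^{l,n+1/2}|^2,R^{n+1/2}\big)+k\sum_{\sigma\in\mathcal E_{int}}\tau_\sigma\,\mathcal A_\sigma\big(e^{\xi^{n+1/2}}\big)\,D(\log R^{n+1/2})_{i,\sigma}\,DR^{n+1/2}_{i,\sigma}\ \ge 0 . \]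
   Context: Mesh. $\Omega\subset\mathbb R^d$ is a bounded polygonal/polyhedral domain with $\partial\Omega=\Gamma_D\cup\Gamma_N$, $\Gamma_D\cap\Gamma_N=\emptyset$. A Voronoi finite-volume mesh consists of points $\mathbf x_1,\dots,\mathbf x_N$ and control volumes $V_i=\{\mathbf y\in\Omega:|\mathbf y-\mathbf x_i|<|\mathbf y-\mathbf x_j|\ \forall j\ne i\}$. An interior face is $\sigma=\partial V_i\cap\partial V_j$ of positive $(d-1)$-measure, written $\sigma=i|j$; $\mathcal E_{int}$ is the set of interior faces and $\mathcal E_{i,int}$ those of $V_i$; $\mathcal E^D_{i,ext}$, $\mathcal E^N_{i,ext}$ are the faces of $\partial V_i$ lying in $\Gamma_D$, resp. $\Gamma_N$. $\mathrm m(\cdot)$ is Lebesgue measure (in dimension $d$ or $d-1$); $d_\sigma=|\mathbf x_i-\mathbf x_j|$ for $\sigma=i|j$ and $d_\sigma=\mathrm{dist}(\mathbf x_i,\sigma)$ for exterior faces of $V_i$; $\tau_\sigma=\mathrm m(\sigma)/d_\sigma$. Grid functions are vectors $u=(u_1,\dots,u_N)\in\mathbb R^N$; for $\sigma=i|j$, $Du_{i,\sigma}=u_j-u_i$. For positive $u$ and $\sigma=i|j$, $\mathcal A_\sigma u=\frac{(\mathrm m(V_i)+\mathrm m(V_j))u_iu_j}{\mathrm m(V_i)u_j+\mathrm m(V_j)u_i}$ (harmonic average). The discrete inner product is $(f,g)=\sum_{i=1}^N\mathrm m(V_i)f_ig_i$; exponentials, logarithms, products and quotients of grid functions are taken componentwise.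 Scheme II (modified Crank–Nicolson in the variables $\eta^l=\log c^l$, $\xi=\log T$). Parameters: $\varepsilon>0$, $k>0$, $C_T>0$, $\Delta t>0$, $\nu^l>0$, $z^l\in\mathbb R$, a grid function $\rho^f$, Dirichlet data $\psi^D_\sigma$ on $\Gamma_D$-faces, Neumann data $g_\sigma$ on $\Gamma_N$-faces. Define $e^{f^{n+1/2}}:=e^{(f^n+f^{n+1})/2}$ for $f=\xi,\eta^l$, $\psi^{n+1/2}=\frac12(\psi^n+\psi^{n+1})$, and \[Q^{l}=\eta^{l,n+1}-\frac{e^{\eta^{l,n+1}}-e^{\eta^{l,n}}}{2e^{\eta^{l,n+1}}}-\frac{(e^{\eta^{l,n+1}}-e^{\eta^{l,n}})^2}{6e^{2\eta^{l,n+1}}},\qquad R^{n+1/2}=e^{-\xi^{n+1}}+\frac{e^{\xi^{n+1}}-e^{\xi^n}}{2e^{2\xi^{n+1}}}+\frac{(e^{\xi^{n+1}}-e^{\xi^n})^2}{3e^{3\xi^{n+1}}}.\] For $\sigma=i|j$ define the face flux \[G^l_{i,\sigma}=-\frac1{\nu^ld_\sigma}\Big[\mathcal A_\sigma\big(e^{\eta^{l,n+1/2}+\xi^{n+1/2}}\big)DQ^l_{i,\sigma}+\mathcal A_\sigma\big(e^{\eta^{l,n+1/2}}\big)D\big(z^l\psi^{n+1/2}+e^{\xi^{n+1/2}}\big)_{i,\sigma}\Big],\] with zero flux through exterior faces. The scheme reads, for $i=1,\dots,N$, $l=1,\dots,M$: (a) $\frac{e^{\eta^{l,n+1}_i}-e^{\eta^{l,n}_i}}{\Delta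 t}+\frac{\varepsilon}{\mathrm m(V_i)}\sum_{\sigma\in\mathcal E_{i,int}}\mathrm m(\sigma)G^l_{i,\sigma}=0$; (b) $-\frac{\varepsilon^2}{\mathrm m(V_i)}\Big[\sum_{\sigma\in\mathcal E_{i,int}}\tau_\sigma D\psi^{n+1}_{i,\sigma}+\sum_{\sigma\in\mathcal E^D_{i,ext}}\tau_\sigma(\psi^D_\sigma-\psi^{n+1}_i)\Big]-\frac1{\mathrm m(V_i)}\sum_{\sigma\in\mathcal E^N_{i,ext}}\mathrm m(\sigma)g_\sigma=\sum_lz^le^{\eta^{l,n+1}_i}+\rho^f_i$; (c) $C_T\frac{e^{\xi^{n+1}_i}-e^{\xi^n_i}}{\Delta t}=-\frac{k}{\mathrm m(V_i)}\sum_{\sigma\in\mathcal E_{i,int}}\tau_\sigma\mathcal A_\sigma(e^{\xi^{n+1/2}})D(\log R^{n+1/2})_{i,\sigma}+\frac{P_i}{R^{n+1/2}_i}+\varepsilon\sum_l\nu^le^{\eta^{l,n+1/2}_i}|\check{\mathbf u}^{l,n+1/2}_i|^2$ (thermally insulated: no exterior-face terms), where \[P_i=\sum_{l=1}^M\Big[\frac{\varepsilon}{\mathrm m(V_i)}\sum_{\sigma\in\mathcal E_{i,int}}\mathrm m(\sigma)G^l_{i,\sigma}Q^l_\sigma+(1+Q^l_i)\frac{e^{\eta^{l,n+1}_i}-e^{\eta^{l,n}_i}}{\Delta t}\Big],\] $Q^l_\sigma$ is a face value of $Q^l$ depending only on $\sigma$, and $\check{\mathbf u}^{l,n+1/2}_i\in\mathbb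 R^d$ are given cell-wise velocity reconstructions; $|\check{\mathbf u}^{l,n+1/2}|^2$ is the grid function $i\mapsto|\check{\mathbf u}^{l,n+1/2}_i|^2$. In the last sum of the claim $\sigma=i|j$ with either orientation (the product is orientation-independent). *)

theory Defs
  imports "HOL-Analysis.Analysis"
begin

text \<open>Abstract Voronoi finite-volume mesh: cells are indexed by 1..N, faces have an
  abstract type 'f. An interior face s joins the cells cl s and cr s.\<close>

definition nbr :: "('f \<Rightarrow> nat) \<Rightarrow> ('f \<Rightarrow> nat) \<Rightarrow> 'f \<Rightarrow> nat \<Rightarrow> nat" where
  "nbr cl cr s i = (if cl s = i then cr s else cl s)"

definition Dg :: "('f \<Rightarrow> nat) \<Rightarrow> ('f \<Rightarrow> nat) \<Rightarrow> (nat \<Rightarrow> real) \<Rightarrow> nat \<Rightarrow> 'f \<Rightarrow> real" where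
  "Dg cl cr u i s = u (nbr cl cr s i) - u i"

definition faces_of :: "'f set \<Rightarrow> ('f \<Rightarrow> nat) \<Rightarrow> ('f \<Rightarrow> nat) \<Rightarrow> nat \<Rightarrow> 'f set" where
  "faces_of E cl cr i = {s \<in> E. cl s = i \<or> cr s = i}"

definition harm_avg :: "(nat \<Rightarrow> real) \<Rightarrow> ('f \<Rightarrow> nat) \<Rightarrow> ('f \<Rightarrow> nat) \<Rightarrow> (nat \<Rightarrow> real) \<Rightarrow> 'f \<Rightarrow> real" where
  "harm_avg vol cl cr u s =
     (let i = cl s; j = cr s in (vol i + vol j) * u i * u j / (vol i * u j + vol j * u i))"

definition dip :: "(nat \<Rightarrow> real) \<Rightarrow> nat \<Rightarrow> (nat \<Rightarrow> real) \<Rightarrow> (nat \<Rightarrow> real) \<Rightarrow> real" where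
  "dip vol N f g = (\<Sum>i=1..N. vol i * f i * g i)"

definition half :: "(nat \<Rightarrow> real) \<Rightarrow> (nat \<Rightarrow> real) \<Rightarrow> nat \<Rightarrow> real" where
  "half f0 f1 i = (f0 i + f1 i) / 2"

definition Qcn :: "(nat \<Rightarrow> real) \<Rightarrow> (nat \<Rightarrow> real) \<Rightarrow> nat \<Rightarrow> real" where
  "Qcn eta0 eta1 i = eta1 i - (exp (eta1 i) - exp (eta0 i)) / (2 * exp (eta1 i))
      - (exp (eta1 i) - exp (eta0 i))^2 / (6 * exp (2 * eta1 i))"

definition Rcn :: "(nat \<Rightarrow> real) \<Rightarrow> (nat \<Rightarrow> real) \<Rightarrow> nat \<Rightarrow> real" where
  "Rcn xi0 xi1 i = exp (- xi1 i) + (exp (xi1 i) - exp (xi0 i)) / (2 * exp (2 * xi1 i))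
      + (exp (xi1 i) - exp (xi0 i))^2 / (3 * exp (3 * xi1 i))"

definition flux :: "(nat \<Rightarrow> real) \<Rightarrow> ('f \<Rightarrow> nat) \<Rightarrow> ('f \<Rightarrow> nat) \<Rightarrow> ('f \<Rightarrow> real) \<Rightarrow> real \<Rightarrow> real
    \<Rightarrow> (nat \<Rightarrow> real) \<Rightarrow> (nat \<Rightarrow> real) \<Rightarrow> (nat \<Rightarrow> real) \<Rightarrow> (nat \<Rightarrow> real)
    \<Rightarrow> (nat \<Rightarrow> real) \<Rightarrow> (nat \<Rightarrow> real) \<Rightarrow> nat \<Rightarrow> 'f \<Rightarrow> real" where
  "flux vol cl cr d nu z eta0 eta1 xi0 xi1 psi0 psi1 i s =
     - (1 / (nu * d s)) *
       (harm_avg vol cl cr (\<lambda>j. exp (half eta0 eta1 j + half xi0 xi1 j)) s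
          * Dg cl cr (Qcn eta0 eta1) i s
        + harm_avg vol cl cr (\<lambda>j. exp (half eta0 eta1 j)) s
          * Dg cl cr (\<lambda>j. z * half psi0 psi1 j + exp (half xi0 xi1 j)) i s)"

definition entropy :: "(nat \<Rightarrow> real) \<Rightarrow> nat \<Rightarrow> nat \<Rightarrow> (nat \<Rightarrow> nat \<Rightarrow> real) \<Rightarrow> (nat \<Rightarrow> real) \<Rightarrow> real \<Rightarrow> real" where
  "entropy vol N M c T CT =
     - (\<Sum>l=1..M. dip vol N (c l) (\<lambda>i. ln (c l i))) + dip vol N (\<lambda>i. ln (T i) + 1) (\<lambda>_. CT)"

end

theory Submission
  imports Defs
begin

text \<open>
  Write \<open>c = e\<^sup>\<eta>\<close> and \<open>T = e\<^sup>\<xi>\<close>. The weights \<open>Q\<close> and \<open>R\<close> of the modified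
  Crank--Nicolson step are chosen so that the discrete chain rules become one-sided:
  \<open>c\<^sub>1 log c\<^sub>1 - c\<^sub>0 log c\<^sub>0 \<le> (1 + Q) (c\<^sub>1 - c\<^sub>0)\<close> and
  \<open>R (T\<^sub>1 - T\<^sub>0) \<le> log T\<^sub>1 - log T\<^sub>0\<close>. Both reduce, with \<open>t = c\<^sub>0/c\<^sub>1\<close> resp.
  \<open>t = T\<^sub>0/T\<^sub>1\<close>, to a cubic Taylor remainder of \<open>log\<close> whose derivative has the sign of
  \<open>-(1 - t)\<^sup>3\<close>, so it is minimal at \<open>t = 1\<close>.

  Multiplying the temperature equation (c) by \<open>m(V\<^sub>i) R\<^sub>i\<close> and applying these inequalities bounds the
  entropy increase of each cell from below by its heat flux, its \<open>Q\<close>-weighted species flux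
  and its friction term. Summed over the cells, the species fluxes cancel because they are
  antisymmetric across every face, and summation by parts turns the heat flux into
  \<open>k \<Sum> \<tau> A(e\<^sup>\<xi>) D(log R) DR\<close>, which is nonnegative as \<open>log\<close> is increasing. Mass
  conservation is the same cancellation applied to (a).
\<close>

lemma ge_at_sign_change_of_deriv:
  fixes g g' :: "real \<Rightarrow> real"
  assumes "\<And>t. 0 < t \<Longrightarrow> (g has_real_derivative g' t) (at t)"
    and "\<And>t. 0 < t \<Longrightarrow> t \<le> c \<Longrightarrow> g' t \<le> 0"
    and "\<And>t. c \<le> t \<Longrightarrow> 0 \<le> g' t"
    and "0 < c" "0 < t"
  shows "g c \<le> g t"
proof (cases "t \<le> c")
  case True
  show ?thesis
    by (rule deriv_nonpos_imp_antimono[of t c g g']) (use assms True in auto)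
next
  case False
  show ?thesis
    by (rule deriv_nonneg_imp_mono[of c t g g']) (use assms False in auto)
qed

lemma one_minus_cube_nonneg_iff: "(0::real) \<le> (1 - t) ^ 3 \<longleftrightarrow> t \<le> 1"
  by (metis diff_ge_0_iff_ge zero_le_odd_power odd_numeral)

lemma ln_plus_cubic_quotient_nonneg:
  fixes t :: real assumes "0 < t"
  shows "0 \<le> ln t + ((1 - t) - (1 - t)^2 / 2 - (1 - t)^3 / 6) / t"
proof -
  let ?g = "\<lambda>t::real. ln t + ((1 - t) - (1 - t)^2 / 2 - (1 - t)^3 / 6) / t"
  have "(?g has_real_derivative - ((1 - t)^3 / (3 * t^2))) (at t)" if "0 < t" for t
  proof -
    have "(?g has_real_derivative 1 / t + ((- 1 + (1 - t) + (1 - t)^2 / 2) * t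
            - ((1 - t) - (1 - t)^2 / 2 - (1 - t)^3 / 6)) / t^2) (at t)"
      using that by (auto intro!: derivative_eq_intros simp: power2_eq_square field_simps)
    then show ?thesis
      by (rule DERIV_cong) (use that in \<open>simp add: field_simps power2_eq_square power3_eq_cube\<close>)
  qed
  then have "?g 1 \<le> ?g t"
    by (rule ge_at_sign_change_of_deriv)
       (use assms in \<open>auto simp: one_minus_cube_nonneg_iff divide_nonpos_pos\<close>)
  then show ?thesis by simp
qed

lemma ln_taylor3_le_neg_ln:
  fixes t :: real assumes "0 < t"
  shows "(1 - t) + (1 - t)^2 / 2 + (1 - t)^3 / 3 \<le> - ln t"
proof -
  let ?g = "\<lambda>t::real. - ln t - (1 - t) - (1 - t)^2 / 2 - (1 - t)^3 / 3"
  have "(?g has_real_derivative - ((1 - t)^3 / t)) (at t)" if "0 < t" for t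
  proof -
    have "(?g has_real_derivative - 1 / t + 1 + (1 - t) + (1 - t)^2) (at t)"
      using that by (auto intro!: derivative_eq_intros simp: power2_eq_square field_simps)
    then show ?thesis
      by (rule DERIV_cong) (use that in \<open>simp add: field_simps power2_eq_square power3_eq_cube\<close>)
  qed
  then have "?g 1 \<le> ?g t"
    by (rule ge_at_sign_change_of_deriv)
       (use assms in \<open>auto simp: one_minus_cube_nonneg_iff divide_nonpos_pos\<close>)
  then show ?thesis by simp
qed

lemma xlnx_diff_le:
  fixes a b :: real assumes a: "0 < a" and b: "0 < b"
  shows "b * ln b - a * ln a \<le> (1 + (ln b - (b - a) / (2 * b) - (b - a)^2 / (6 * b^2))) * (b - a)"
proof -
  have "0 \<le> a * (ln (a / b) + ((1 - a / b) - (1 - a / b)^2 / 2 - (1 - a / b)^3 / 6) / (a / b))"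
    using ln_plus_cubic_quotient_nonneg[of "a / b"] a b by simp
  also have "\<dots> = (1 + (ln b - (b - a) / (2 * b) - (b - a)^2 / (6 * b^2))) * (b - a)
                 - (b * ln b - a * ln a)"
    using a b by (simp add: ln_div field_simps power2_eq_square power3_eq_cube)
  finally show ?thesis by simp
qed

lemma ln_diff_ge:
  fixes a b :: real assumes a: "0 < a" and b: "0 < b"
  shows "(1 / b + (b - a) / (2 * b^2) + (b - a)^2 / (3 * b^3)) * (b - a) \<le> ln b - ln a"
proof -
  have "(1 / b + (b - a) / (2 * b^2) + (b - a)^2 / (3 * b^3)) * (b - a)
      = (1 - a / b) + (1 - a / b)^2 / 2 + (1 - a / b)^3 / 3"
    using b by (simp add: field_simps power2_eq_square power3_eq_cube)
  also have "\<dots> \<le> - ln (a / b)"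
    using ln_taylor3_le_neg_ln[of "a / b"] a b by simp
  finally show ?thesis using a b by (simp add: ln_div)
qed

lemma ln_diff_ge_coeff_pos:
  fixes a b :: real assumes b: "0 < b"
  shows "0 < 1 / b + (b - a) / (2 * b^2) + (b - a)^2 / (3 * b^3)"
proof -
  define u where "u = (b - a) / b"
  have "0 < 1 + u / 2 + u^2 / 3"
    using zero_le_power2[of "u + 3 / 4"] by (simp add: power2_eq_square algebra_simps)
  also have "1 + u / 2 + u^2 / 3 = b * (1 / b + (b - a) / (2 * b^2) + (b - a)^2 / (3 * b^3))"
    using b by (simp add: u_def field_simps power2_eq_square power3_eq_cube)
  finally show ?thesis using b by (simp add: zero_less_mult_iff)
qed

lemma Rcn_eq:
  "Rcn xi0 xi1 i = 1 / exp (xi1 i) + (exp (xi1 i) - exp (xi0 i)) / (2 * exp (xi1 i)^2)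
     + (exp (xi1 i) - exp (xi0 i))^2 / (3 * exp (xi1 i)^3)"
  unfolding Rcn_def by (simp add: exp_minus inverse_eq_divide flip: exp_of_nat_mult)

lemma Qcn_eq:
  "Qcn eta0 eta1 i = eta1 i - (exp (eta1 i) - exp (eta0 i)) / (2 * exp (eta1 i))
     - (exp (eta1 i) - exp (eta0 i))^2 / (6 * exp (eta1 i)^2)"
  unfolding Qcn_def by (simp add: exp_double)

lemma Rcn_pos: "0 < Rcn xi0 xi1 i"
  unfolding Rcn_eq by (rule ln_diff_ge_coeff_pos) simp

lemma Rcn_mult_diff_le: "Rcn xi0 xi1 i * (exp (xi1 i) - exp (xi0 i)) \<le> xi1 i - xi0 i"
  using ln_diff_ge[of "exp (xi0 i)" "exp (xi1 i)"] unfolding Rcn_eq by simp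

lemma exp_mult_diff_le_Qcn:
  "exp (eta1 i) * eta1 i - exp (eta0 i) * eta0 i
     \<le> (1 + Qcn eta0 eta1 i) * (exp (eta1 i) - exp (eta0 i))"
  using xlnx_diff_le[of "exp (eta0 i)" "exp (eta1 i)"] unfolding Qcn_eq
  by (simp add: mult.commute)

lemma cell_entropy_production:
  fixes eta0 eta1 :: "nat \<Rightarrow> nat \<Rightarrow> real"
  assumes vol: "0 < vol" and CT: "0 < CT" and dt: "0 < dt"
    and heat: "CT * (exp (xi1 i) - exp (xi0 i)) / dt
        = - (k / vol) * a
          + (\<Sum>l\<in>L. eps / vol * p l
               + (1 + Qcn (eta0 l) (eta1 l) i) * (exp (eta1 l i) - exp (eta0 l i)) / dt)
            / Rcn xi0 xi1 i
          + eps * b"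
  shows "- k * Rcn xi0 xi1 i * a + eps * (\<Sum>l\<in>L. p l) + eps * vol * Rcn xi0 xi1 i * b
     \<le> vol * (CT * (xi1 i - xi0 i)
               - (\<Sum>l\<in>L. exp (eta1 l i) * eta1 l i - exp (eta0 l i) * eta0 l i)) / dt"
proof -
  let ?R = "Rcn xi0 xi1 i"
  let ?P = "\<Sum>l\<in>L. (1 + Qcn (eta0 l) (eta1 l) i) * (exp (eta1 l i) - exp (eta0 l i))"
  have R: "0 < ?R" by (rule Rcn_pos)
  have "vol * (\<Sum>l\<in>L. eps / vol * p l
               + (1 + Qcn (eta0 l) (eta1 l) i) * (exp (eta1 l i) - exp (eta0 l i)) / dt)
      = (\<Sum>l\<in>L. eps * p l
               + vol * ((1 + Qcn (eta0 l) (eta1 l) i) * (exp (eta1 l i) - exp (eta0 l i))) / dt)"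
    unfolding sum_distrib_left using vol by (intro sum.cong) (simp_all add: field_simps)
  also have "\<dots> = eps * (\<Sum>l\<in>L. p l) + vol * ?P / dt"
    by (simp add: sum.distrib sum_distrib_left sum_divide_distrib)
  finally have vol_sum: "vol * (\<Sum>l\<in>L. eps / vol * p l
               + (1 + Qcn (eta0 l) (eta1 l) i) * (exp (eta1 l i) - exp (eta0 l i)) / dt)
      = eps * (\<Sum>l\<in>L. p l) + vol * ?P / dt" .
  from heat vol_sum have "- k * ?R * a + eps * (\<Sum>l\<in>L. p l) + eps * vol * ?R * b
      = vol * (CT * (?R * (exp (xi1 i) - exp (xi0 i))) - ?P) / dt"
    using vol R dt by (simp add: field_simps)
  also have "\<dots> \<le> vol * (CT * (xi1 i - xi0 i)
               - (\<Sum>l\<in>L. exp (eta1 l i) * eta1 l i - exp (eta0 l i) * eta0 l i)) / dt"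
  proof -
    have "(\<Sum>l\<in>L. exp (eta1 l i) * eta1 l i - exp (eta0 l i) * eta0 l i) \<le> ?P"
      by (rule sum_mono) (rule exp_mult_diff_le_Qcn)
    then show ?thesis
      using vol CT dt Rcn_mult_diff_le[of xi0 xi1 i]
      by (intro divide_right_mono mult_left_mono diff_mono) auto
  qed
  finally show ?thesis .
qed

lemma entropy_exp:
  "entropy vol N M (\<lambda>l i. exp (eta l i)) (\<lambda>i. exp (xi i)) CT
     = (\<Sum>i=1..N. vol i * (CT * (xi i + 1) - (\<Sum>l=1..M. exp (eta l i) * eta l i)))"
proof -
  have "(\<Sum>l=1..M. \<Sum>i=1..N. vol i * exp (eta l i) * eta l i)
      = (\<Sum>i=1..N. \<Sum>l=1..M. vol i * exp (eta l i) * eta l i)"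
    by (rule sum.swap)
  then show ?thesis
    unfolding entropy_def dip_def by (simp add: sum_subtractf sum_distrib_left algebra_simps)
qed

lemma entropy_exp_diff:
  "entropy vol N M (\<lambda>l i. exp (eta1 l i)) (\<lambda>i. exp (xi1 i)) CT
     - entropy vol N M (\<lambda>l i. exp (eta0 l i)) (\<lambda>i. exp (xi0 i)) CT
   = (\<Sum>i=1..N. vol i * (CT * (xi1 i - xi0 i)
        - (\<Sum>l=1..M. exp (eta1 l i) * eta1 l i - exp (eta0 l i) * eta0 l i)))"
  unfolding entropy_exp sum_subtractf[symmetric]
  by (rule sum.cong) (simp_all add: sum_subtractf algebra_simps)

lemma sum_faces_of_eq:
  fixes F :: "nat \<Rightarrow> 'f \<Rightarrow> 'a::comm_monoid_add"
  assumes fin: "finite E"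
    and cells: "\<And>s. s \<in> E \<Longrightarrow> cl s \<in> {1..N} \<and> cr s \<in> {1..N} \<and> cl s \<noteq> cr s"
  shows "(\<Sum>i=1..N. \<Sum>s\<in>faces_of E cl cr i. F i s) = (\<Sum>s\<in>E. F (cl s) s + F (cr s) s)"
proof -
  have "(\<Sum>s\<in>faces_of E cl cr i. F i s)
      = (\<Sum>s\<in>E. (if cl s = i then F i s else 0) + (if cr s = i then F i s else 0))" for i
  proof -
    have "(\<Sum>s\<in>faces_of E cl cr i. F i s) = (\<Sum>s\<in>E. if cl s = i \<or> cr s = i then F i s else 0)"
      unfolding faces_of_def using fin by (simp add: sum.inter_filter)
    also have "\<dots> = (\<Sum>s\<in>E. (if cl s = i then F i s else 0) + (if cr s = i then F i s else 0))"
      by (rule sum.cong) (use cells in auto)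
    finally show ?thesis .
  qed
  then have "(\<Sum>i=1..N. \<Sum>s\<in>faces_of E cl cr i. F i s)
      = (\<Sum>s\<in>E. \<Sum>i=1..N. (if cl s = i then F i s else 0) + (if cr s = i then F i s else 0))"
    by (simp add: sum.swap[of _ _ E])
  also have "\<dots> = (\<Sum>s\<in>E. F (cl s) s + F (cr s) s)"
    by (rule sum.cong) (use cells in \<open>auto simp: sum.distrib cong: if_cong\<close>)
  finally show ?thesis .
qed

lemma sum_faces_of_antisym_eq_0:
  fixes F :: "nat \<Rightarrow> 'f \<Rightarrow> 'a::ab_group_add"
  assumes "finite E"
    and "\<And>s. s \<in> E \<Longrightarrow> cl s \<in> {1..N} \<and> cr s \<in> {1..N} \<and> cl s \<noteq> cr s"
    and antisym: "\<And>s. s \<in> E \<Longrightarrow> F (cr s) s = - F (cl s) s"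
  shows "(\<Sum>i=1..N. \<Sum>s\<in>faces_of E cl cr i. F i s) = 0"
proof -
  have "(\<Sum>i=1..N. \<Sum>s\<in>faces_of E cl cr i. F i s) = (\<Sum>s\<in>E. F (cl s) s + F (cr s) s)"
    by (rule sum_faces_of_eq[OF assms(1,2)])
  also have "\<dots> = 0"
    by (rule sum.neutral) (simp add: antisym)
  finally show ?thesis .
qed

lemma Dg_other_cell: "cl s \<noteq> cr s \<Longrightarrow> Dg cl cr u (cr s) s = - Dg cl cr u (cl s) s"
  unfolding Dg_def nbr_def by simp

lemma flux_other_cell:
  "cl s \<noteq> cr s \<Longrightarrow> flux vol cl cr d nu z eta0 eta1 xi0 xi1 psi0 psi1 (cr s) s
                   = - flux vol cl cr d nu z eta0 eta1 xi0 xi1 psi0 psi1 (cl s) s"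
  unfolding flux_def by (simp add: Dg_other_cell algebra_simps)

lemma sum_mult_faces_of_Dg:
  assumes "finite E"
    and cells: "\<And>s. s \<in> E \<Longrightarrow> cl s \<in> {1..N} \<and> cr s \<in> {1..N} \<and> cl s \<noteq> cr s"
  shows "(\<Sum>i=1..N. u i * (\<Sum>s\<in>faces_of E cl cr i. w s * Dg cl cr f i s))
       = - (\<Sum>s\<in>E. w s * Dg cl cr f (cl s) s * Dg cl cr u (cl s) s)"
proof -
  have "(\<Sum>i=1..N. u i * (\<Sum>s\<in>faces_of E cl cr i. w s * Dg cl cr f i s))
      = (\<Sum>s\<in>E. u (cl s) * (w s * Dg cl cr f (cl s) s) + u (cr s) * (w s * Dg cl cr f (cr s) s))"
    unfolding sum_distrib_left by (rule sum_faces_of_eq[OF assms])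
  also have "\<dots> = - (\<Sum>s\<in>E. w s * Dg cl cr f (cl s) s * Dg cl cr u (cl s) s)"
    unfolding sum_negf[symmetric]
    by (rule sum.cong) (use cells in \<open>auto simp: Dg_def nbr_def algebra_simps\<close>)
  finally show ?thesis .
qed

lemma conservative_update_preserves_mass:
  fixes vol v0 v1 :: "nat \<Rightarrow> real" and F :: "nat \<Rightarrow> 'f \<Rightarrow> real"
  assumes "finite E"
    and cells: "\<And>s. s \<in> E \<Longrightarrow> cl s \<in> {1..N} \<and> cr s \<in> {1..N} \<and> cl s \<noteq> cr s"
    and vol: "\<And>i. i \<in> {1..N} \<Longrightarrow> 0 < vol i" and "dt \<noteq> 0"
    and update: "\<And>i. i \<in> {1..N} \<Longrightarrow>
        (v1 i - v0 i) / dt + eps / vol i * (\<Sum>s\<in>faces_of E cl cr i. F i s) = 0"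
    and antisym: "\<And>s. s \<in> E \<Longrightarrow> F (cr s) s = - F (cl s) s"
  shows "(\<Sum>i=1..N. vol i * v1 i) = (\<Sum>i=1..N. vol i * v0 i)"
proof -
  have "vol i * v1 i - vol i * v0 i = - (dt * eps) * (\<Sum>s\<in>faces_of E cl cr i. F i s)"
    if "i \<in> {1..N}" for i
    using update[OF that] vol[OF that] \<open>dt \<noteq> 0\<close> by (simp add: field_simps add_eq_0_iff)
  then have "(\<Sum>i=1..N. vol i * v1 i) - (\<Sum>i=1..N. vol i * v0 i)
      = - (dt * eps) * (\<Sum>i=1..N. \<Sum>s\<in>faces_of E cl cr i. F i s)"
    by (simp add: sum_distrib_left flip: sum_subtractf)
  also have "\<dots> = 0"
    using sum_faces_of_antisym_eq_0[where F = F, OF assms(1) cells antisym] by simp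
  finally show ?thesis by simp
qed

lemma sum_cells_entropy_production:
  fixes F :: "nat \<Rightarrow> nat \<Rightarrow> 'f \<Rightarrow> real"
  assumes fin: "finite E"
    and cells: "\<And>s. s \<in> E \<Longrightarrow> cl s \<in> {1..N} \<and> cr s \<in> {1..N} \<and> cl s \<noteq> cr s"
    and antisym: "\<And>l s. s \<in> E \<Longrightarrow> F l (cr s) s = - F l (cl s) s"
  shows "(\<Sum>i=1..N. - k * R i * (\<Sum>s\<in>faces_of E cl cr i. w s * Dg cl cr (\<lambda>j. ln (R j)) i s)
            + eps * (\<Sum>l\<in>L. \<Sum>s\<in>faces_of E cl cr i. F l i s)
            + eps * vol i * R i * (\<Sum>l\<in>L. f l i))
       = eps * (\<Sum>l\<in>L. dip vol N (f l) R)
         + k * (\<Sum>s\<in>E. w s * Dg cl cr (\<lambda>j. ln (R j)) (cl s) s * Dg cl cr R (cl s) s)"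
proof -
  have "(\<Sum>i=1..N. - k * R i * (\<Sum>s\<in>faces_of E cl cr i. w s * Dg cl cr (\<lambda>j. ln (R j)) i s)
            + eps * (\<Sum>l\<in>L. \<Sum>s\<in>faces_of E cl cr i. F l i s)
            + eps * vol i * R i * (\<Sum>l\<in>L. f l i))
      = - k * (\<Sum>i=1..N. R i * (\<Sum>s\<in>faces_of E cl cr i. w s * Dg cl cr (\<lambda>j. ln (R j)) i s))
        + eps * (\<Sum>i=1..N. \<Sum>l\<in>L. \<Sum>s\<in>faces_of E cl cr i. F l i s)
        + eps * (\<Sum>i=1..N. vol i * R i * (\<Sum>l\<in>L. f l i))"
    by (simp add: sum.distrib sum_distrib_left mult.assoc)
  moreover have "(\<Sum>i=1..N. R i * (\<Sum>s\<in>faces_of E cl cr i. w s * Dg cl cr (\<lambda>j. ln (R j)) i s))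
      = - (\<Sum>s\<in>E. w s * Dg cl cr (\<lambda>j. ln (R j)) (cl s) s * Dg cl cr R (cl s) s)"
    by (rule sum_mult_faces_of_Dg[where cl = cl and cr = cr and N = N, OF fin cells])
  moreover have "(\<Sum>i=1..N. \<Sum>l\<in>L. \<Sum>s\<in>faces_of E cl cr i. F l i s) = 0"
    using sum_faces_of_antisym_eq_0[where cl = cl and cr = cr and N = N and F = "F l" for l,
        OF fin cells antisym]
    by (subst sum.swap) simp
  moreover have "(\<Sum>i=1..N. vol i * R i * (\<Sum>l\<in>L. f l i)) = (\<Sum>l\<in>L. dip vol N (f l) R)"
    unfolding dip_def by (subst sum.swap) (simp add: sum_distrib_left algebra_simps)
  ultimately show ?thesis
    by simp
qed

lemma harm_avg_pos:
  assumes "0 < vol (cl s)" "0 < vol (cr s)" "0 < u (cl s)" "0 < u (cr s)"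
  shows "0 < harm_avg vol cl cr u s"
  using assms unfolding harm_avg_def Let_def by (simp add: add_pos_pos)

lemma ln_diff_mult_diff_nonneg:
  fixes x y :: real assumes "0 < x" "0 < y"
  shows "0 \<le> (ln y - ln x) * (y - x)"
  using assms by (cases "x \<le> y") (auto intro: mult_nonneg_nonneg mult_nonpos_nonpos)

lemma Dg_ln_mult_Dg_nonneg:
  assumes "\<And>j. 0 < u j"
  shows "0 \<le> Dg cl cr (\<lambda>j. ln (u j)) i s * Dg cl cr u i s"
  unfolding Dg_def using ln_diff_mult_diff_nonneg assms by simp

lemma sum_harm_avg_Dg_ln_mult_Dg_nonneg:
  assumes cells: "\<And>s. s \<in> E \<Longrightarrow> cl s \<in> {1..N} \<and> cr s \<in> {1..N}"
    and vol: "\<And>i. i \<in> {1..N} \<Longrightarrow> 0 < vol i"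
    and tau: "\<And>s. s \<in> E \<Longrightarrow> 0 \<le> tau s"
    and u: "\<And>j. 0 < u j" and R: "\<And>j. 0 < R j"
  shows "0 \<le> (\<Sum>s\<in>E. tau s * harm_avg vol cl cr u s
                    * Dg cl cr (\<lambda>j. ln (R j)) (cl s) s * Dg cl cr R (cl s) s)"
proof (rule sum_nonneg)
  fix s assume s: "s \<in> E"
  have "0 \<le> harm_avg vol cl cr u s"
    using cells[OF s] vol u by (intro less_imp_le harm_avg_pos) auto
  then show "0 \<le> tau s * harm_avg vol cl cr u s
                    * Dg cl cr (\<lambda>j. ln (R j)) (cl s) s * Dg cl cr R (cl s) s"
    using tau[OF s] Dg_ln_mult_Dg_nonneg[of R cl cr "cl s" s, OF R]
    by (metis mult.assoc mult_nonneg_nonneg)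
qed

theorem theorem3p4:
  fixes N M :: nat
    and x :: "nat \<Rightarrow> 'v::euclidean_space"
    and vol :: "nat \<Rightarrow> real"
    and Eint :: "'f set" and ED EN :: "nat \<Rightarrow> 'f set"
    and cl cr :: "'f \<Rightarrow> nat"
    and mf d :: "'f \<Rightarrow> real"
    and eps k CT dt :: real
    and nu z :: "nat \<Rightarrow> real"
    and rhof :: "nat \<Rightarrow> real"
    and psiD g :: "'f \<Rightarrow> real"
    and eta0 eta1 :: "nat \<Rightarrow> nat \<Rightarrow> real"
    and psi0 psi1 xi0 xi1 :: "nat \<Rightarrow> real"
    and Qf :: "nat \<Rightarrow> 'f \<Rightarrow> real"
    and uc :: "nat \<Rightarrow> nat \<Rightarrow> 'v"
  defines "tau \<equiv> (\<lambda>s. mf s / d s)"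
    and "G \<equiv> (\<lambda>l. flux vol cl cr d (nu l) (z l) (eta0 l) (eta1 l) xi0 xi1 psi0 psi1)"
    and "Q \<equiv> (\<lambda>l. Qcn (eta0 l) (eta1 l))"
    and "R \<equiv> Rcn xi0 xi1"
    and "eT \<equiv> (\<lambda>i. exp (half xi0 xi1 i))"
  assumes mesh_pts: "inj_on x {1..N}"
    and mesh_vol: "\<And>i. i \<in> {1..N} \<Longrightarrow> vol i > 0"
    and mesh_fin: "finite Eint"
    and mesh_cells: "\<And>s. s \<in> Eint \<Longrightarrow> cl s \<in> {1..N} \<and> cr s \<in> {1..N} \<and> cl s \<noteq> cr s"
    and mesh_unique: "inj_on (\<lambda>s. {cl s, cr s}) Eint"
    and mesh_dint: "\<And>s. s \<in> Eint \<Longrightarrow> d s = dist (x (cl s)) (x (cr s))"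
    and mesh_ext: "\<And>i. i \<in> {1..N} \<Longrightarrow> finite (ED i) \<and> finite (EN i) \<and> ED i \<inter> EN i = {}
                     \<and> ED i \<inter> Eint = {} \<and> EN i \<inter> Eint = {}"
    and mesh_mf: "\<And>s. s \<in> Eint \<union> (\<Union>i\<in>{1..N}. ED i \<union> EN i) \<Longrightarrow> mf s > 0 \<and> d s > 0"
    and par: "eps > 0" "k > 0" "CT > 0" "dt > 0"
    and nu_pos: "\<And>l. l \<in> {1..M} \<Longrightarrow> nu l > 0"
    and scheme_a: "\<And>i l. i \<in> {1..N} \<Longrightarrow> l \<in> {1..M} \<Longrightarrow>
        (exp (eta1 l i) - exp (eta0 l i)) / dt
        + eps / vol i * (\<Sum>s\<in>faces_of Eint cl cr i. mf s * G l i s) = 0"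
    and scheme_b: "\<And>i. i \<in> {1..N} \<Longrightarrow>
        - (eps^2 / vol i) * ((\<Sum>s\<in>faces_of Eint cl cr i. tau s * Dg cl cr psi1 i s)
                            + (\<Sum>s\<in>ED i. tau s * (psiD s - psi1 i)))
        - (1 / vol i) * (\<Sum>s\<in>EN i. mf s * g s)
        = (\<Sum>l=1..M. z l * exp (eta1 l i)) + rhof i"
    and scheme_c: "\<And>i. i \<in> {1..N} \<Longrightarrow>
        CT * (exp (xi1 i) - exp (xi0 i)) / dt
        = - (k / vol i) * (\<Sum>s\<in>faces_of Eint cl cr i.
                 tau s * harm_avg vol cl cr eT s * Dg cl cr (\<lambda>j. ln (R j)) i s)
          + (\<Sum>l=1..M. eps / vol i * (\<Sum>s\<in>faces_of Eint cl cr i. mf s * G l i s * Qf l s)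
                       + (1 + Q l i) * (exp (eta1 l i) - exp (eta0 l i)) / dt) / R i
          + eps * (\<Sum>l=1..M. nu l * exp (half (eta0 l) (eta1 l) i) * (norm (uc l i))^2)"
  shows "(\<forall>l\<in>{1..M}. dip vol N (\<lambda>i. exp (eta1 l i)) (\<lambda>_. 1)
                    = dip vol N (\<lambda>i. exp (eta0 l i)) (\<lambda>_. 1))
     \<and> (\<forall>i\<in>{1..N}. (\<forall>l\<in>{1..M}. exp (eta1 l i) > 0) \<and> exp (xi1 i) > 0)
     \<and> (entropy vol N M (\<lambda>l i. exp (eta1 l i)) (\<lambda>i. exp (xi1 i)) CT
          - entropy vol N M (\<lambda>l i. exp (eta0 l i)) (\<lambda>i. exp (xi0 i)) CT) / dt
        \<ge> eps * (\<Sum>l=1..M. dip vol N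
                   (\<lambda>i. nu l * exp (half (eta0 l) (eta1 l) i) * (norm (uc l i))^2) R)
          + k * (\<Sum>s\<in>Eint. tau s * harm_avg vol cl cr eT s
                   * Dg cl cr (\<lambda>j. ln (R j)) (cl s) s * Dg cl cr R (cl s) s)
     \<and> eps * (\<Sum>l=1..M. dip vol N
                   (\<lambda>i. nu l * exp (half (eta0 l) (eta1 l) i) * (norm (uc l i))^2) R)
          + k * (\<Sum>s\<in>Eint. tau s * harm_avg vol cl cr eT s
                   * Dg cl cr (\<lambda>j. ln (R j)) (cl s) s * Dg cl cr R (cl s) s) \<ge> 0"
proof -
  have R_pos: "\<And>i. 0 < R i"
    unfolding R_def by (rule Rcn_pos)
  have G_antisym: "\<And>l s. s \<in> Eint \<Longrightarrow> G l (cr s) s = - G l (cl s) s"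
    unfolding G_def using mesh_cells by (simp add: flux_other_cell)
  have mass: "dip vol N (\<lambda>i. exp (eta1 l i)) (\<lambda>_. 1) = dip vol N (\<lambda>i. exp (eta0 l i)) (\<lambda>_. 1)"
    if "l \<in> {1..M}" for l
    unfolding dip_def
    using conservative_update_preserves_mass[OF mesh_fin mesh_cells mesh_vol _ scheme_a[OF _ that]]
      G_antisym par by simp
  define W1 where "W1 = eps * (\<Sum>l=1..M. dip vol N
                   (\<lambda>i. nu l * exp (half (eta0 l) (eta1 l) i) * (norm (uc l i))^2) R)"
  define W2 where "W2 = k * (\<Sum>s\<in>Eint. tau s * harm_avg vol cl cr eT s
                   * Dg cl cr (\<lambda>j. ln (R j)) (cl s) s * Dg cl cr R (cl s) s)"
  have "W1 + W2 = (\<Sum>i=1..N. - k * R i * (\<Sum>s\<in>faces_of Eint cl cr i.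
                 tau s * harm_avg vol cl cr eT s * Dg cl cr (\<lambda>j. ln (R j)) i s)
        + eps * (\<Sum>l=1..M. \<Sum>s\<in>faces_of Eint cl cr i. mf s * G l i s * Qf l s)
        + eps * vol i * R i * (\<Sum>l=1..M. nu l * exp (half (eta0 l) (eta1 l) i) * (norm (uc l i))^2))"
    unfolding W1_def W2_def
    by (rule sum_cells_entropy_production[where cl = cl and cr = cr and N = N, OF mesh_fin mesh_cells,
          symmetric]) (auto simp: G_antisym)
  also have "\<dots> \<le> (\<Sum>i=1..N. vol i * (CT * (xi1 i - xi0 i)
               - (\<Sum>l=1..M. exp (eta1 l i) * eta1 l i - exp (eta0 l i) * eta0 l i)) / dt)"
    using cell_entropy_production[OF mesh_vol par(3,4) scheme_c[unfolded R_def Q_def]]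
    unfolding R_def by (intro sum_mono)
  finally have "W1 + W2 \<le> (entropy vol N M (\<lambda>l i. exp (eta1 l i)) (\<lambda>i. exp (xi1 i)) CT
          - entropy vol N M (\<lambda>l i. exp (eta0 l i)) (\<lambda>i. exp (xi0 i)) CT) / dt"
    unfolding entropy_exp_diff sum_divide_distrib .
  moreover have "0 \<le> W1"
    unfolding W1_def dip_def using par nu_pos mesh_vol R_pos
    by (intro mult_nonneg_nonneg sum_nonneg) (auto intro!: mult_nonneg_nonneg less_imp_le)
  moreover have "0 \<le> W2"
    unfolding W2_def using mesh_cells mesh_vol R_pos par(2) mesh_mf[OF UnI1]
      divide_pos_pos[of "mf s" "d s" for s] unfolding tau_def
    by (intro mult_nonneg_nonneg sum_harm_avg_Dg_ln_mult_Dg_nonneg)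
       (auto simp: eT_def less_imp_le)
  ultimately show ?thesis
    using mass unfolding W1_def W2_def by simp
qed

end
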